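(* Let $p$ be a prime, $\eta>0$, and let $H$ be a nonempty subset of $\mathbb{F}_p^*$ with $|H\cdot H|<(2-\eta)|H|$. Then there exist a positive integer $m\le 1/\eta$, a subgroup $H^*$ of $\mathbb{F}_p^*$, and elements $u_1,\dots,u_m\in H$ such that $$H\subseteq\bigcup_{i=1}^m u_iH^*\qquad\text{and}\qquad \frac{|H|}{m}\le |H^*|\le\frac{2-\eta}{2m-1}\,|H|.$$
   Context: $\mathbb{F}_p^*$ is the multiplicative group of the field with $p$ elements. For $X\subseteq\mathbb{F}_p^*$, $X\cdot X=\{xy: x,y\in X\}$, and $uH^*=\{uh:h\in H^*\}$. *)

theory Defs
  imports "HOL-Number_Theory.Residues" "HOL-Algebra.Multiplicative_Group" "HOL-Algebra.Coset"
begin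

text \<open>The multiplicative group F_p^* of the field with p elements, modelled as the
units of the residue ring Z/pZ (carrier {1..p-1} of int, multiplication mod p).\<close>

definition Fpstar :: "int \<Rightarrow> int monoid" where
  "Fpstar p = mult_of (residue_ring p)"

definition prodset :: "int \<Rightarrow> int set \<Rightarrow> int set" where
  "prodset p X = {x \<otimes>\<^bsub>Fpstar p\<^esub> y | x y. x \<in> X \<and> y \<in> X}"

end

theory Submission
  imports Defs
begin

text \<open>
  Let \<open>K\<close> be the period (stabiliser) of the product set \<open>HH\<close> in the finite abelian
  group \<open>F_p^*\<close>.  Kneser's theorem, in the form \<open>|A| + |B| \<le> |AB| + |period(AB)|\<close>,
  applied to \<open>A = B = KH\<close> (whose square is again \<open>HH\<close>) gives \<open>2|KH| \<le> |HH| + |K|\<close>.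
  The set \<open>KH\<close> is the disjoint union of \<open>m\<close> cosets \<open>u\<^sub>1K, \<dots>, u\<^sub>mK\<close> with \<open>u\<^sub>i \<in> H\<close>,
  so \<open>|KH| = m|K|\<close> and \<open>|H| \<le> m|K|\<close>.  Together with \<open>|HH| < (2 - \<eta>)|H|\<close> this yields
  \<open>(2m - 1)|K| < (2 - \<eta>)|H| \<le> (2 - \<eta>)m|K|\<close>, hence \<open>m\<eta> < 1\<close>, and the two bounds on \<open>|K|\<close>.
\<close>

definition period :: "('a, 'b) monoid_scheme \<Rightarrow> 'a set \<Rightarrow> 'a set" where
  "period G X = {g \<in> carrier G. g <#\<^bsub>G\<^esub> X = X}"

text \<open>The ASCII multiset notation \<open><#\<close> (imported with the residue rings) would clash
  with left cosets.\<close>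
no_notation (ASCII) subset_mset (infix \<open><#\<close> 50)

lemma card_Int_pair_le:
  assumes "finite S" "finite Z"
  shows "card (S \<inter> Z) + card (S \<inter> W) \<le> card S + card (Z \<inter> W)"
proof -
  have "card (S \<inter> Z) + card (S \<inter> W) = card ((S \<inter> Z) \<union> (S \<inter> W)) + card ((S \<inter> Z) \<inter> (S \<inter> W))"
    using assms by (intro card_Un_Int) auto
  moreover have "card ((S \<inter> Z) \<union> (S \<inter> W)) \<le> card S"
    using assms by (intro card_mono) auto
  moreover have "card ((S \<inter> Z) \<inter> (S \<inter> W)) \<le> card (Z \<inter> W)"
    using assms by (intro card_mono) auto
  ultimately show ?thesis by linarith
qed

locale finite_comm_group = comm_group +
  assumes finite_carrier: "finite (carrier G)"

context finite_comm_group
begin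

lemma finite_subset_carrier: "X \<subseteq> carrier G \<Longrightarrow> finite X"
  using finite_carrier finite_subset by blast

lemma l_coset_image: "a <# X = (\<lambda>x. a \<otimes> x) ` X"
  unfolding l_coset_def by auto

lemma r_coset_image: "X #> a = (\<lambda>x. x \<otimes> a) ` X"
  unfolding r_coset_def by auto

lemma set_mult_iff: "z \<in> A <#> B \<longleftrightarrow> (\<exists>a\<in>A. \<exists>b\<in>B. z = a \<otimes> b)"
  unfolding set_mult_def by auto

lemma subset_set_mult:
  assumes "\<one> \<in> K" "A \<subseteq> carrier G"
  shows "A \<subseteq> K <#> A"
proof
  fix a assume a: "a \<in> A"
  then have "a = \<one> \<otimes> a" using assms(2) by auto
  then show "a \<in> K <#> A" using assms(1) a unfolding set_mult_iff by blast
qed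

lemma set_mult_nonempty: "A \<noteq> {} \<Longrightarrow> B \<noteq> {} \<Longrightarrow> A <#> B \<noteq> {}"
  unfolding set_mult_def by blast

lemma l_coset_eq_r_coset:
  assumes "a \<in> carrier G" "X \<subseteq> carrier G"
  shows "a <# X = X #> a"
  unfolding l_coset_image r_coset_image
  by (rule image_cong[OF refl]) (use assms in \<open>auto simp: m_comm subsetD\<close>)

lemma card_l_coset:
  assumes "a \<in> carrier G" "X \<subseteq> carrier G"
  shows "card (a <# X) = card X"
proof -
  have "inj_on (\<lambda>x. a \<otimes> x) X"
    using assms unfolding inj_on_def by (metis Units_l_cancel Units_eq subsetD)
  then show ?thesis unfolding l_coset_image by (rule card_image)
qed

lemma card_r_coset:
  assumes "a \<in> carrier G" "X \<subseteq> carrier G"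
  shows "card (X #> a) = card X"
  using card_l_coset l_coset_eq_r_coset assms by simp

lemma period_carrier: "period G X \<subseteq> carrier G"
  unfolding period_def by blast

lemma finite_period: "finite (period G X)"
  using finite_subset_carrier period_carrier by blast

lemma period_memD: "g \<in> period G X \<Longrightarrow> x \<in> X \<Longrightarrow> g \<otimes> x \<in> X"
  unfolding period_def l_coset_image by blast

text \<open>Since \<open>X\<close> is finite, translating it into itself already means fixing it.\<close>
lemma periodI:
  assumes g: "g \<in> carrier G" and X: "X \<subseteq> carrier G"
    and into: "\<And>x. x \<in> X \<Longrightarrow> g \<otimes> x \<in> X"
  shows "g \<in> period G X"
proof -
  have "g <# X \<subseteq> X" using into unfolding l_coset_image by blast
  moreover have "card (g <# X) = card X" using card_l_coset[OF g X] .
  ultimately have "g <# X = X" using card_subset_eq finite_subset_carrier[OF X] by metis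
  then show ?thesis using g unfolding period_def by blast
qed

lemma period_subgroup:
  assumes X: "X \<subseteq> carrier G"
  shows "subgroup (period G X) G"
proof
  show "period G X \<subseteq> carrier G" by (rule period_carrier)
  show "\<one> \<in> period G X" using X by (intro periodI) auto
  fix g h assume g: "g \<in> period G X" and h: "h \<in> period G X"
  have gc: "g \<in> carrier G" and hc: "h \<in> carrier G" using g h period_carrier by auto
  show "g \<otimes> h \<in> period G X"
  proof (rule periodI)
    fix x assume x: "x \<in> X"
    then have "g \<otimes> (h \<otimes> x) \<in> X" using g h period_memD by blast
    then show "g \<otimes> h \<otimes> x \<in> X" using gc hc X x by (simp add: m_assoc subsetD)
  qed (use gc hc X in auto)
  show "inv g \<in> period G X"
  proof (rule periodI)
    fix x assume "x \<in> X"
    then have "x \<in> g <# X" using g unfolding period_def by blast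
    then obtain y where "y \<in> X" "x = g \<otimes> y" unfolding l_coset_image by blast
    then show "inv g \<otimes> x \<in> X" using gc X by (simp add: m_assoc[symmetric] subsetD)
  qed (use gc X in auto)
qed

lemma period_Int_subset:
  assumes "X \<subseteq> carrier G" "Y \<subseteq> carrier G"
  shows "period G X \<inter> period G Y \<subseteq> period G (X \<union> Y)"
proof
  fix g assume "g \<in> period G X \<inter> period G Y"
  then show "g \<in> period G (X \<union> Y)"
    using assms period_carrier by (intro periodI) (auto intro: period_memD)
qed

lemma escaping_element:
  assumes XU: "X \<subseteq> U" and U: "U \<subseteq> carrier G"
    and larger: "card (period G U) < card (period G X)"
  obtains k w where "k \<in> period G X" "w \<in> U - X" "k \<otimes> w \<notin> U"
proof -
  have "\<not> period G X \<subseteq> period G U"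
  proof
    assume "period G X \<subseteq> period G U"
    then have "card (period G X) \<le> card (period G U)" by (rule card_mono[OF finite_period])
    then show False using larger by simp
  qed
  then obtain k where k: "k \<in> period G X" "k \<notin> period G U" by blast
  then obtain w where w: "w \<in> U" "k \<otimes> w \<notin> U"
    using periodI[OF _ U] period_carrier by blast
  have "w \<notin> X" using period_memD[OF k(1)] w XU by blast
  then show ?thesis using that k w by blast
qed

lemma card_r_coset_Int:
  assumes K1: "subgroup K1 G" and K2: "subgroup K2 G"
    and u: "u \<in> carrier G" and v: "v \<in> carrier G"
  shows "card ((K1 #> u) \<inter> (K2 #> v)) \<le> card (K1 \<inter> K2)"
proof (cases "(K1 #> u) \<inter> (K2 #> v) = {}")
  case True
  then show ?thesis by simp
next
  case False
  let ?I = "(K1 #> u) \<inter> (K2 #> v)"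
  obtain t where t: "t \<in> ?I" using False by blast
  have Ic: "?I \<subseteq> carrier G" using r_coset_subset_G[OF subgroup.subset[OF K1] u] by blast
  have tc: "t \<in> carrier G" using t Ic by blast
  have quotient_mem: "z \<otimes> inv t \<in> K"
    if K: "subgroup K G" and w: "w \<in> carrier G" and zt: "z \<in> K #> w" "t \<in> K #> w" for K w z
  proof -
    have "K #> w = K #> t" using repr_independence[OF zt(2) w K] .
    then show ?thesis using subgroup.rcos_module_imp[OF K is_group tc] zt(1) by simp
  qed
  have "inj_on (\<lambda>z. z \<otimes> inv t) ?I"
    using Ic tc unfolding inj_on_def by (metis right_cancel inv_closed subsetD)
  moreover have "(\<lambda>z. z \<otimes> inv t) ` ?I \<subseteq> K1 \<inter> K2"
    using quotient_mem[OF K1 u] quotient_mem[OF K2 v] t by blast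
  moreover have "finite (K1 \<inter> K2)"
    using finite_subset_carrier subgroup.subset[OF K1] by blast
  ultimately show ?thesis by (metis card_image card_mono)
qed

text \<open>A coset of the period of \<open>Y\<close> through \<open>w \<in> Y\<close> lies in \<open>Y\<close>.  If \<open>k\<close> fixes \<open>X\<close> but
  moves \<open>w\<close> out of \<open>X \<union> Y\<close>, then the part of that coset inside \<open>X\<close>, translated by \<open>k\<close>,
  lands in \<open>X - Y\<close>; so the coset is counted by \<open>Y - X\<close> and \<open>X - Y\<close> together.\<close>
lemma period_coset_split:
  assumes X: "X \<subseteq> carrier G" and Y: "Y \<subseteq> carrier G"
    and k: "k \<in> period G X" and w: "w \<in> Y" and escape: "k \<otimes> w \<notin> X \<union> Y"
  shows "card (period G Y) \<le> card ((Y - X) \<inter> (period G Y #> w))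
                             + card ((X - Y) \<inter> (period G Y #> (k \<otimes> w)))"
proof -
  let ?K = "period G Y"
  let ?Z = "?K #> w"
  have wc: "w \<in> carrier G" using w Y by blast
  have kc: "k \<in> carrier G" using k period_carrier by blast
  have finZ: "finite ?Z" using finite_subset_carrier r_coset_subset_G[OF period_carrier wc] .
  have ZY: "?Z \<subseteq> Y"
    unfolding r_coset_image using period_memD w period_carrier wc by (auto simp: m_comm subsetD)
  have "card ?Z = card (?Z - X) + card (?Z \<inter> X)"
    using card_Int_Diff[OF finZ, of X] by linarith
  moreover have "card ?Z = card ?K" using card_r_coset[OF wc period_carrier] .
  moreover have "card (?Z - X) \<le> card ((Y - X) \<inter> ?Z)"
    using ZY finZ by (intro card_mono) auto
  moreover have "card (?Z \<inter> X) \<le> card ((X - Y) \<inter> (?K #> (k \<otimes> w)))"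
  proof -
    have "k <# (?Z \<inter> X) \<subseteq> (X - Y) \<inter> (?K #> (k \<otimes> w))"
    proof
      fix y assume "y \<in> k <# (?Z \<inter> X)"
      then obtain g where g: "g \<in> ?K" "g \<otimes> w \<in> X" "y = k \<otimes> (g \<otimes> w)"
        unfolding l_coset_image r_coset_image by blast
      have gc: "g \<in> carrier G" using g period_carrier by blast
      have yX: "y \<in> X" using g k period_memD by blast
      have y_coset: "y = g \<otimes> (k \<otimes> w)" using g gc kc wc by (simp add: m_lcomm)
      have "y \<notin> Y"
      proof
        assume "y \<in> Y"
        then have "inv g \<otimes> y \<in> Y"
          using subgroup.m_inv_closed[OF period_subgroup[OF Y] g(1)] period_memD by blast
        also have "inv g \<otimes> y = k \<otimes> w" using y_coset gc kc wc by (simp add: m_assoc[symmetric])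
        finally show False using escape by blast
      qed
      then show "y \<in> (X - Y) \<inter> (?K #> (k \<otimes> w))"
        using yX y_coset g(1) unfolding r_coset_image by blast
    qed
    then have "card (k <# (?Z \<inter> X)) \<le> card ((X - Y) \<inter> (?K #> (k \<otimes> w)))"
      using finite_subset_carrier X by (intro card_mono) auto
    moreover have "card (k <# (?Z \<inter> X)) = card (?Z \<inter> X)"
      using card_l_coset kc X by blast
    ultimately show ?thesis by simp
  qed
  ultimately show ?thesis by linarith
qed

text \<open>DeVos' union lemma: \<open>|X \<union> Y| + |period (X \<union> Y)|\<close> is at least the smaller of the
  corresponding quantities for \<open>X\<close> and \<open>Y\<close>.  Otherwise both periods exceed that of the
  union; escaping elements produce two cosets of each period, and counting them against
  \<open>X - Y\<close> and \<open>Y - X\<close> (their pairwise intersections lying in cosets of the common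
  period) gives a contradiction.\<close>
lemma union_period:
  assumes X: "X \<subseteq> carrier G" and Y: "Y \<subseteq> carrier G"
  shows "min (card X + card (period G X)) (card Y + card (period G Y))
          \<le> card (X \<union> Y) + card (period G (X \<union> Y))"
proof (rule ccontr)
  assume "\<not> ?thesis"
  let ?U = "X \<union> Y" and ?S = "period G (X \<union> Y)"
  let ?KX = "period G X" and ?KY = "period G Y"
  have U: "?U \<subseteq> carrier G" using X Y by blast
  have finite: "finite X" "finite Y" using X Y finite_subset_carrier by auto
  have "card ?U = card X + card (Y - X)" "card ?U = card Y + card (X - Y)"
    using finite card_Un_disjoint[of X "Y - X"] card_Un_disjoint[of Y "X - Y"]
    by (auto simp: Un_commute)
  with \<open>\<not> ?thesis\<close> have big_X: "card (Y - X) + card ?S < card ?KX"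
    and big_Y: "card (X - Y) + card ?S < card ?KY" by auto
  have "card ?S < card ?KX" "card ?S < card ?KY" using big_X big_Y by linarith+
  then obtain k1 w k2 v where k1: "k1 \<in> ?KX" and w: "w \<in> ?U - X" and k1w: "k1 \<otimes> w \<notin> ?U"
    and k2: "k2 \<in> ?KY" and v: "v \<in> ?U - Y" and k2v: "k2 \<otimes> v \<notin> ?U"
    using escaping_element[OF Un_upper1 U] escaping_element[OF Un_upper2 U] by metis
  have wc: "w \<in> carrier G" and vc: "v \<in> carrier G" using w v X Y by auto
  have k1c: "k1 \<in> carrier G" and k2c: "k2 \<in> carrier G" using k1 k2 period_carrier by auto
  have split_Y: "card ?KY \<le> card ((Y - X) \<inter> (?KY #> w)) + card ((X - Y) \<inter> (?KY #> (k1 \<otimes> w)))"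
    using period_coset_split[OF X Y k1] w k1w by blast
  have split_X: "card ?KX \<le> card ((X - Y) \<inter> (?KX #> v)) + card ((Y - X) \<inter> (?KX #> (k2 \<otimes> v)))"
    by (rule period_coset_split[OF Y X k2]) (use v k2v in auto)
  have common: "card (?KY \<inter> ?KX) \<le> card ?S"
    using period_Int_subset[OF X Y] finite_period by (intro card_mono) auto
  have meet: "card ((?KY #> a) \<inter> (?KX #> b)) \<le> card ?S"
    if "a \<in> carrier G" "b \<in> carrier G" for a b
    using order_trans[OF card_r_coset_Int[OF period_subgroup[OF Y] period_subgroup[OF X] that] common] .
  have finZ: "finite (?KY #> a)" if "a \<in> carrier G" for a
    by (rule finite_subset_carrier[OF r_coset_subset_G[OF period_carrier that]])
  have "card ((Y - X) \<inter> (?KY #> w)) + card ((Y - X) \<inter> (?KX #> (k2 \<otimes> v)))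
        \<le> card (Y - X) + card ((?KY #> w) \<inter> (?KX #> (k2 \<otimes> v)))"
    using finite finZ[OF wc] by (intro card_Int_pair_le) auto
  moreover have "card ((X - Y) \<inter> (?KY #> (k1 \<otimes> w))) + card ((X - Y) \<inter> (?KX #> v))
        \<le> card (X - Y) + card ((?KY #> (k1 \<otimes> w)) \<inter> (?KX #> v))"
    using finite finZ[OF m_closed[OF k1c wc]] by (intro card_Int_pair_le) auto
  moreover have "card ((?KY #> w) \<inter> (?KX #> (k2 \<otimes> v))) \<le> card ?S"
    "card ((?KY #> (k1 \<otimes> w)) \<inter> (?KX #> v)) \<le> card ?S"
    using meet wc vc k1c k2c by simp_all
  ultimately show False using split_X split_Y big_X big_Y by linarith
qed

lemma union_family_period:
  assumes "finite F" "F \<noteq> {}" "\<And>X. X \<in> F \<Longrightarrow> X \<subseteq> carrier G"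
    and "\<And>X. X \<in> F \<Longrightarrow> N \<le> card X + card (period G X)"
  shows "N \<le> card (\<Union>F) + card (period G (\<Union>F))"
  using assms
proof (induction F rule: finite_ne_induct)
  case (singleton X)
  then show ?case by simp
next
  case (insert X F)
  have "N \<le> card (\<Union>F) + card (period G (\<Union>F))" "N \<le> card X + card (period G X)"
    and "X \<subseteq> carrier G" "\<Union>F \<subseteq> carrier G" using insert by blast+
  then show ?case using union_period[of X "\<Union>F"] by simp
qed

text \<open>The degenerate case of Kneser's theorem: if \<open>A b\<^sup>-\<^sup>1 B \<subseteq> A\<close> for some \<open>b \<in> B\<close>,
  then \<open>AB = bA\<close> has \<open>|A|\<close> elements and its period contains the \<open>|B|\<close> elements of \<open>Bb\<^sup>-\<^sup>1\<close>.\<close>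
lemma kneser_degenerate:
  assumes A: "A \<subseteq> carrier G" and B: "B \<subseteq> carrier G" and b: "b \<in> B"
    and closed: "\<And>a b'. a \<in> A \<Longrightarrow> b' \<in> B \<Longrightarrow> a \<otimes> inv b \<otimes> b' \<in> A"
  shows "card A + card B \<le> card (A <#> B) + card (period G (A <#> B))"
proof -
  have bc: "b \<in> carrier G" using b B by blast
  have AB: "A <#> B \<subseteq> carrier G" using setmult_subset_G[OF A B] .
  have "A <#> B = b <# A"
  proof
    show "A <#> B \<subseteq> b <# A"
    proof
      fix x assume "x \<in> A <#> B"
      then obtain a b' where ab: "a \<in> A" "b' \<in> B" "x = a \<otimes> b'" unfolding set_mult_iff by blast
      have ac: "a \<in> carrier G" and b'c: "b' \<in> carrier G" using ab A B by auto
      have "a \<otimes> inv b \<otimes> b' = inv b \<otimes> x" using ab ac b'c bc by (simp add: m_ac)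
      then have "x = b \<otimes> (a \<otimes> inv b \<otimes> b')" using ab ac b'c bc by (simp add: m_assoc[symmetric])
      then show "x \<in> b <# A" using closed ab unfolding l_coset_image by blast
    qed
    show "b <# A \<subseteq> A <#> B"
    proof
      fix x assume "x \<in> b <# A"
      then obtain a where a: "a \<in> A" "x = b \<otimes> a" unfolding l_coset_image by blast
      then have "x = a \<otimes> b" using bc A by (simp add: m_comm subsetD)
      then show "x \<in> A <#> B" using a b unfolding set_mult_iff by blast
    qed
  qed
  then have card_AB: "card (A <#> B) = card A" using card_l_coset[OF bc A] by simp
  have "B #> inv b \<subseteq> period G (A <#> B)"
  proof
    fix g assume "g \<in> B #> inv b"
    then obtain b' where b': "b' \<in> B" "g = b' \<otimes> inv b" unfolding r_coset_image by blast
    have b'c: "b' \<in> carrier G" using b' B by blast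
    show "g \<in> period G (A <#> B)"
    proof (rule periodI[OF _ AB])
      show "g \<in> carrier G" using b' b'c bc by simp
      fix x assume "x \<in> A <#> B"
      then obtain a d where ad: "a \<in> A" "d \<in> B" "x = a \<otimes> d" unfolding set_mult_iff by blast
      have "g \<otimes> x = (a \<otimes> inv b \<otimes> b') \<otimes> d" using ad b' bc b'c A B by (simp add: m_ac subsetD)
      then show "g \<otimes> x \<in> A <#> B" using closed[OF ad(1) b'(1)] ad unfolding set_mult_iff by blast
    qed
  qed
  then have "card (B #> inv b) \<le> card (period G (A <#> B))" using finite_period card_mono by blast
  then show ?thesis using card_AB card_r_coset[OF inv_closed[OF bc] B] by simp
qed

lemma e_transform_subset:
  assumes e: "e \<in> carrier G" and B: "B \<subseteq> carrier G"
  shows "(A \<union> (e <# B)) <#> {b \<in> B. e \<otimes> b \<in> A} \<subseteq> A <#> B"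
proof
  fix x assume "x \<in> (A \<union> (e <# B)) <#> {b \<in> B. e \<otimes> b \<in> A}"
  then obtain y z where y: "y \<in> A \<union> (e <# B)" and z: "z \<in> B" "e \<otimes> z \<in> A" and x: "x = y \<otimes> z"
    unfolding set_mult_iff by blast
  show "x \<in> A <#> B"
  proof (cases "y \<in> A")
    case True
    then show ?thesis using z x unfolding set_mult_iff by blast
  next
    case False
    then obtain d where d: "d \<in> B" "y = e \<otimes> d" using y unfolding l_coset_image by blast
    then have "x = (e \<otimes> z) \<otimes> d" using x z e B by (simp add: m_ac subsetD)
    then show ?thesis using z d unfolding set_mult_iff by blast
  qed
qed

lemma e_transform_card:
  assumes e: "e \<in> carrier G" and A: "A \<subseteq> carrier G" and B: "B \<subseteq> carrier G"
  shows "card (A \<union> (e <# B)) + card {b \<in> B. e \<otimes> b \<in> A} = card A + card B"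
proof -
  have "e <# {b \<in> B. e \<otimes> b \<in> A} = A \<inter> (e <# B)" unfolding l_coset_image by auto
  moreover have "card (e <# {b \<in> B. e \<otimes> b \<in> A}) = card {b \<in> B. e \<otimes> b \<in> A}"
    by (rule card_l_coset[OF e]) (use B in auto)
  moreover have "card (A \<union> (e <# B)) + card (A \<inter> (e <# B)) = card A + card (e <# B)"
    using finite_subset_carrier A l_coset_subset_G[OF B e] by (intro card_Un_Int[symmetric]) auto
  ultimately show ?thesis using card_l_coset[OF e B] by simp
qed

text \<open>Outside the degenerate case, every product \<open>ab\<close> lies in the product set of an
  e-transform whose second set is a nonempty proper subset of \<open>B\<close>: take \<open>e = a' b\<^sup>-\<^sup>1\<close>
  for a witness \<open>a' b\<^sup>-\<^sup>1 b' \<notin> A\<close>; then \<open>b\<close> stays in the second set and \<open>b'\<close> leaves it.\<close>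
lemma e_transform_cover:
  assumes A: "A \<subseteq> carrier G" and B: "B \<subseteq> carrier G"
    and nondegenerate: "\<And>b. b \<in> B \<Longrightarrow> \<exists>a\<in>A. \<exists>b'\<in>B. a \<otimes> inv b \<otimes> b' \<notin> A"
    and x: "x \<in> A <#> B"
  obtains e where "e \<in> carrier G" "{b \<in> B. e \<otimes> b \<in> A} \<noteq> {}" "{b \<in> B. e \<otimes> b \<in> A} \<noteq> B"
    "x \<in> (A \<union> (e <# B)) <#> {b \<in> B. e \<otimes> b \<in> A}"
proof -
  obtain a b where ab: "a \<in> A" "b \<in> B" "x = a \<otimes> b" using x unfolding set_mult_iff by blast
  obtain a' b' where a'b': "a' \<in> A" "b' \<in> B" "a' \<otimes> inv b \<otimes> b' \<notin> A"
    using nondegenerate[OF ab(2)] by blast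
  let ?e = "a' \<otimes> inv b"
  have ec: "?e \<in> carrier G" using a'b' ab A B by auto
  have "?e \<otimes> b = a'" using a'b' ab A B by (simp add: m_assoc subsetD)
  then have b_in: "b \<in> {b \<in> B. ?e \<otimes> b \<in> A}" using ab a'b' by simp
  moreover have "b' \<notin> {b \<in> B. ?e \<otimes> b \<in> A}" using a'b' by simp
  moreover have "x \<in> (A \<union> (?e <# B)) <#> {b \<in> B. ?e \<otimes> b \<in> A}"
    using ab b_in unfolding set_mult_iff by blast
  ultimately show ?thesis using that ec a'b'(2) by blast
qed

text \<open>By induction on \<open>|B|\<close>: in the degenerate case conclude directly;
  otherwise every product \<open>ab\<close> lies in the product set of an e-transform with a strictly
  smaller nonempty second set, and DeVos' lemma combines the inductive bounds for all
  these (smaller) product sets, whose union is \<open>AB\<close>.\<close>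
theorem kneser:
  assumes "A \<subseteq> carrier G" "B \<subseteq> carrier G" "A \<noteq> {}" "B \<noteq> {}"
  shows "card A + card B \<le> card (A <#> B) + card (period G (A <#> B))"
  using assms
proof (induction "card B" arbitrary: A B rule: less_induct)
  case less
  have A: "A \<subseteq> carrier G" and B: "B \<subseteq> carrier G" using less.prems by auto
  show ?case
  proof (cases "\<exists>b\<in>B. \<forall>a\<in>A. \<forall>b'\<in>B. a \<otimes> inv b \<otimes> b' \<in> A")
    case True
    then show ?thesis using kneser_degenerate[OF A B] by blast
  next
    case False
    then have nondegenerate: "\<And>b. b \<in> B \<Longrightarrow> \<exists>a\<in>A. \<exists>b'\<in>B. a \<otimes> inv b \<otimes> b' \<notin> A" by blast
    define A1 where "A1 e = A \<union> (e <# B)" for e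
    define B1 where "B1 e = {b \<in> B. e \<otimes> b \<in> A}" for e
    define E where "E = {e \<in> carrier G. B1 e \<noteq> {} \<and> B1 e \<noteq> B}"
    define F where "F = (\<lambda>e. A1 e <#> B1 e) ` E"
    have A1: "A1 e \<subseteq> carrier G" if "e \<in> carrier G" for e
      using A l_coset_subset_G[OF B that] unfolding A1_def by blast
    have B1: "B1 e \<subseteq> carrier G" for e using B unfolding B1_def by blast
    have E: "E \<subseteq> carrier G" unfolding E_def by blast
    have F_carrier: "X \<subseteq> carrier G" if X: "X \<in> F" for X
    proof -
      obtain e where "e \<in> E" "X = A1 e <#> B1 e" using X unfolding F_def by blast
      then show ?thesis using setmult_subset_G[OF A1 B1] E by blast
    qed
    have bound: "card A + card B \<le> card X + card (period G X)" if X: "X \<in> F" for X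
    proof -
      obtain e where e: "e \<in> E" "X = A1 e <#> B1 e" using X unfolding F_def by blast
      have ec: "e \<in> carrier G" using e E by blast
      have "B1 e \<subset> B" using e unfolding E_def B1_def by blast
      then have "card (B1 e) < card B" using finite_subset_carrier[OF B] psubset_card_mono by blast
      moreover have "A1 e \<noteq> {}" using less.prems unfolding A1_def by blast
      moreover have "B1 e \<noteq> {}" using e unfolding E_def by blast
      ultimately have "card (A1 e) + card (B1 e) \<le> card X + card (period G X)"
        using less.hyps[OF _ A1[OF ec] B1] e(2) by blast
      then show ?thesis using e_transform_card[OF ec A B] unfolding A1_def B1_def by simp
    qed
    have covered: "\<exists>e\<in>E. x \<in> A1 e <#> B1 e" if x: "x \<in> A <#> B" for x
    proof -
      obtain e where "e \<in> carrier G" "B1 e \<noteq> {}" "B1 e \<noteq> B" "x \<in> A1 e <#> B1 e"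
        using e_transform_cover[OF A B nondegenerate x] unfolding A1_def B1_def .
      then show ?thesis unfolding E_def by blast
    qed
    have "A1 e <#> B1 e \<subseteq> A <#> B" if "e \<in> E" for e
      unfolding A1_def B1_def using e_transform_subset[OF _ B] E that by blast
    then have union: "\<Union>F = A <#> B" using covered unfolding F_def by blast
    have "F \<noteq> {}" using covered set_mult_nonempty less.prems(3,4) unfolding F_def by blast
    moreover have "finite F" unfolding F_def E_def using finite_carrier by simp
    ultimately have "card A + card B \<le> card (\<Union>F) + card (period G (\<Union>F))"
      using union_family_period F_carrier bound by blast
    then show ?thesis unfolding union .
  qed
qed

lemma period_square:
  assumes A: "A \<subseteq> carrier G"
  defines "K \<equiv> period G (A <#> A)"
  shows "(K <#> A) <#> (K <#> A) = A <#> A"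
proof
  have AA: "A <#> A \<subseteq> carrier G" using setmult_subset_G[OF A A] .
  have Kc: "K \<subseteq> carrier G" unfolding K_def by (rule period_carrier)
  show "(K <#> A) <#> (K <#> A) \<subseteq> A <#> A"
  proof
    fix x assume "x \<in> (K <#> A) <#> (K <#> A)"
    then obtain k a k' a' where q: "k \<in> K" "a \<in> A" "k' \<in> K" "a' \<in> A"
      "x = (k \<otimes> a) \<otimes> (k' \<otimes> a')" unfolding set_mult_def by blast
    then have "x = (k \<otimes> k') \<otimes> (a \<otimes> a')" using Kc A by (simp add: m_ac subsetD)
    moreover have "k \<otimes> k' \<in> K"
      using subgroup.m_closed[OF period_subgroup[OF AA]] q unfolding K_def by blast
    moreover have "a \<otimes> a' \<in> A <#> A" using q unfolding set_mult_iff by blast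
    ultimately show "x \<in> A <#> A" using period_memD unfolding K_def by blast
  qed
  have "\<one> \<in> K" using subgroup.one_closed[OF period_subgroup[OF AA]] unfolding K_def .
  then have sub: "A \<subseteq> K <#> A" using A by (rule subset_set_mult)
  show "A <#> A \<subseteq> (K <#> A) <#> (K <#> A)" using mono_set_mult[OF sub sub] .
qed

corollary kneser_square:
  assumes "A \<subseteq> carrier G" "A \<noteq> {}"
  defines "K \<equiv> period G (A <#> A)"
  shows "2 * card (K <#> A) \<le> card (A <#> A) + card K"
proof -
  have AA: "A <#> A \<subseteq> carrier G" using setmult_subset_G[OF assms(1) assms(1)] .
  have "\<one> \<in> K" using subgroup.one_closed[OF period_subgroup[OF AA]] unfolding K_def .
  then have KA_nonempty: "K <#> A \<noteq> {}" using set_mult_nonempty[OF _ assms(2)] by blast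
  have KA: "K <#> A \<subseteq> carrier G"
    using setmult_subset_G[OF period_carrier assms(1)] unfolding K_def .
  have square: "(K <#> A) <#> (K <#> A) = A <#> A"
    unfolding K_def by (rule period_square[OF assms(1)])
  have "card (K <#> A) + card (K <#> A) \<le> card (A <#> A) + card K"
    using kneser[OF KA KA KA_nonempty KA_nonempty] unfolding square K_def[symmetric] .
  then show ?thesis by simp
qed

lemma coset_cover:
  assumes K: "subgroup K G" and A: "A \<subseteq> carrier G" "A \<noteq> {}"
  obtains m u where "0 < m" "\<forall>i\<in>{1..m}. u i \<in> A" "A \<subseteq> (\<Union>i\<in>{1..m}. u i <# K)"
    "card (K <#> A) = m * card K"
proof -
  have Kc: "K \<subseteq> carrier G" using K subgroup.subset by blast
  define R where "R = (\<lambda>a. K #> a) ` A"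
  have R_rcosets: "R \<subseteq> rcosets K" unfolding R_def using rcosetsI Kc A by blast
  have finR: "finite R" unfolding R_def using finite_subset_carrier[OF A(1)] by simp
  have "K <#> A = \<Union>R" unfolding R_def set_mult_def r_coset_def by blast
  moreover have "card (\<Union>R) = card R * card K"
  proof -
    have disjoint: "pairwise disjnt R" using pairwise_subset[OF rcos_disjoint[OF K] R_rcosets] .
    have card_r: "card r = card K" and finite_r: "finite r" if "r \<in> R" for r
      using that card_rcosets_equal[OF _ Kc] cosets_finite[OF _ Kc finite_carrier] R_rcosets
      by auto
    have "card (\<Union>R) = (\<Sum>r\<in>R. card r)" using card_Union_disjoint[OF disjoint finite_r] .
    also have "\<dots> = (\<Sum>r\<in>R. card K)" using card_r by (rule sum.cong[OF refl])
    finally show ?thesis by simp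
  qed
  ultimately have card_KA: "card (K <#> A) = card R * card K" by simp
  obtain h where h: "bij_betw h {1..card R} R" using ex_bij_betw_nat_finite_1[OF finR] by blast
  define u where "u i = (SOME a. a \<in> A \<and> h i = K #> a)" for i
  have u: "u i \<in> A \<and> h i = K #> u i" if "i \<in> {1..card R}" for i
  proof -
    have "\<exists>a. a \<in> A \<and> h i = K #> a" using bij_betwE[OF h] that unfolding R_def by blast
    then show ?thesis unfolding u_def by (rule someI_ex)
  qed
  have "A \<subseteq> (\<Union>i\<in>{1..card R}. u i <# K)"
  proof
    fix a assume a: "a \<in> A"
    then have "K #> a \<in> h ` {1..card R}" using bij_betw_imp_surj_on[OF h] unfolding R_def by blast
    then obtain i where i: "i \<in> {1..card R}" "h i = K #> a" by blast
    have "a \<in> K #> u i" using u[OF i(1)] i(2) rcos_self[OF _ K] a A by auto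
    moreover have "u i <# K = K #> u i" using l_coset_eq_r_coset[OF _ Kc] u[OF i(1)] A by blast
    ultimately show "a \<in> (\<Union>i\<in>{1..card R}. u i <# K)" using i(1) by auto
  qed
  moreover have "0 < card R" using A(2) finR unfolding R_def by (simp add: card_gt_0_iff)
  ultimately show ?thesis using that u card_KA by blast
qed

theorem small_doubling_cosets:
  assumes A: "A \<subseteq> carrier G" "A \<noteq> {}"
  obtains m K u where "subgroup K G" "0 < m" "\<forall>i\<in>{1..m}. u i \<in> A"
    "A \<subseteq> (\<Union>i\<in>{1..m}. u i <# K)" "card A \<le> m * card K"
    "2 * (m * card K) \<le> card (A <#> A) + card K"
proof -
  define K where "K = period G (A <#> A)"
  have K: "subgroup K G" unfolding K_def using period_subgroup setmult_subset_G A by blast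
  obtain m u where mu: "0 < m" "\<forall>i\<in>{1..m}. u i \<in> A" "A \<subseteq> (\<Union>i\<in>{1..m}. u i <# K)"
    and card_KA: "card (K <#> A) = m * card K"
    using coset_cover[OF K A] by blast
  have "A \<subseteq> K <#> A" using subset_set_mult subgroup.one_closed[OF K] A by blast
  then have "card A \<le> m * card K"
    using card_KA card_mono finite_subset_carrier setmult_subset_G subgroup.subset K A by metis
  moreover have "2 * (m * card K) \<le> card (A <#> A) + card K"
    using kneser_square[OF A] card_KA unfolding K_def by simp
  ultimately show ?thesis using that K mu by blast
qed

end

lemma finite_comm_group_Fpstar:
  assumes "prime p"
  shows "finite_comm_group (Fpstar p)"
proof -
  interpret R: residues_prime "nat p" "residue_ring (int (nat p))"
    by unfold_locales (use assms in auto)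
  have p: "int (nat p) = p" using prime_gt_0_int[OF assms] by simp
  have field: "field (residue_ring p)" using R.is_field p by simp
  have "comm_group (Fpstar p)"
    unfolding Fpstar_def using field.field_mult_group[OF field] cring.cring_simprules(14)
      field.axioms(1) domain.axioms(1) field by (intro group.group_comm_groupI) fastforce+
  moreover have "finite (carrier (Fpstar p))" using R.finite p unfolding Fpstar_def by simp
  ultimately show ?thesis by (simp add: finite_comm_group_def finite_comm_group_axioms_def)
qed

lemma prodset_eq_set_mult: "prodset p X = X <#>\<^bsub>Fpstar p\<^esub> X"
  unfolding prodset_def set_mult_def by blast

lemma small_doubling_arithmetic:
  fixes h m k s \<eta> :: real
  assumes cover: "h \<le> m * k" and kneser: "2 * (m * k) \<le> s + k"
    and doubling: "s < (2 - \<eta>) * h"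
    and pos: "1 \<le> m" "0 < k" "0 \<le> h" "0 \<le> s" "0 < \<eta>"
  shows "m \<le> 1 / \<eta> \<and> h / m \<le> k \<and> k \<le> (2 - \<eta>) / (2 * m - 1) * h"
proof -
  have "(2 * m - 1) * k = 2 * (m * k) - k" by (simp add: algebra_simps)
  then have upper: "(2 * m - 1) * k < (2 - \<eta>) * h" using kneser doubling by linarith
  have "0 < (2 - \<eta>) * h" using doubling pos by linarith
  then have "0 < 2 - \<eta>" using pos by (simp add: zero_less_mult_iff)
  then have "(2 - \<eta>) * h \<le> ((2 - \<eta>) * m) * k"
    using mult_left_mono[OF cover] by (simp add: mult.assoc)
  then have "(2 * m - 1) * k < ((2 - \<eta>) * m) * k" using upper by linarith
  then have "2 * m - 1 < (2 - \<eta>) * m" using pos by simp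
  then have "\<eta> * m < 1" by (simp add: algebra_simps)
  then have "m \<le> 1 / \<eta>" using pos by (simp add: le_divide_eq mult.commute)
  moreover have "h / m \<le> k" using cover pos by (simp add: divide_le_eq mult.commute)
  moreover have "k \<le> (2 - \<eta>) / (2 * m - 1) * h"
    using upper pos by (simp add: le_divide_eq mult.commute)
  ultimately show ?thesis by blast
qed

theorem mainTheorem2:
  fixes p :: int and \<eta> :: real and H :: "int set"
  assumes "prime p" and "\<eta> > 0"
    and "H \<subseteq> carrier (Fpstar p)" and "H \<noteq> {}"
    and "real (card (prodset p H)) < (2 - \<eta>) * real (card H)"
  shows "\<exists>(m::nat) Hs (u::nat \<Rightarrow> int).
           0 < m \<and> real m \<le> 1 / \<eta> \<and>
           subgroup Hs (Fpstar p) \<and>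
           (\<forall>i\<in>{1..m}. u i \<in> H) \<and>
           H \<subseteq> (\<Union>i\<in>{1..m}. u i <#\<^bsub>Fpstar p\<^esub> Hs) \<and>
           real (card H) / real m \<le> real (card Hs) \<and>
           real (card Hs) \<le> (2 - \<eta>) / (2 * real m - 1) * real (card H)"
proof -
  interpret F: finite_comm_group "Fpstar p" using finite_comm_group_Fpstar[OF assms(1)] .
  obtain m K u where K: "subgroup K (Fpstar p)" and m: "0 < m"
    and cover: "\<forall>i\<in>{1..m}. u i \<in> H" "H \<subseteq> (\<Union>i\<in>{1..m}. u i <#\<^bsub>Fpstar p\<^esub> K)"
    and size: "card H \<le> m * card K" "2 * (m * card K) \<le> card (prodset p H) + card K"
    using F.small_doubling_cosets[OF assms(3,4)] unfolding prodset_eq_set_mult by metis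
  have "0 < card K"
    using subgroup.one_closed[OF K] F.finite_subset_carrier subgroup.subset[OF K]
    by (auto simp: card_gt_0_iff)
  moreover have "real (card H) \<le> real (m * card K)"
    "real (2 * (m * card K)) \<le> real (card (prodset p H) + card K)"
    using size by (simp_all only: of_nat_le_iff)
  ultimately have "real m \<le> 1 / \<eta> \<and> real (card H) / real m \<le> real (card K) \<and>
      real (card K) \<le> (2 - \<eta>) / (2 * real m - 1) * real (card H)"
    using small_doubling_arithmetic[of "real (card H)" "real m" "real (card K)"
        "real (card (prodset p H))" \<eta>] assms(2,5) m by simp
  then show ?thesis using K m cover by blast
qed

end
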